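(* Let $g>0$, let $\bar\rho=\bar\rho(x_3)\in L^\infty(\mathbb{R})$ satisfy $\bar\rho'\in C_0^\infty(\mathbb{R})$, $\inf_{\mathbb{R}}\bar\rho>0$ and $\bar\rho'(x_3^0)>0$ for some $x_3^0$, and let $M_{\mathrm c}$, $\mathcal M_{\mathrm{vc}}$, $\mathbb{A}^{\mathrm g}$ and $E_0$ be as in the context. Let $\xi\in\mathbb{R}^2$, $\xi\neq\mathbf 0$. If $\xi\in\mathbb{A}^{\mathrm g}$, then there exists $\psi_0$, with $\psi_0\in H^1(\mathbb{R})$ in the horizontal case and $\psi_0\in\mathcal M_{\mathrm{vc}}$ in the vertical case, such that $E_0(\psi_0)<0$. If $\xi\notin\mathbb{A}^{\mathrm g}$, then $|\xi|^2E_0(\psi)\ge0$ for every $\psi\in H^1(\mathbb{R})$ in the horizontal case, and for every $\psi\in H^2(\mathbb{R})$ in the vertical case.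
   Context: All functions $\psi$ are real-valued functions of $x_3\in\mathbb{R}$, $'=d/dx_3$, $\xi=(\xi_1,\xi_2)$. $M_{\mathrm c}:=\sqrt{\sup_{\psi\in H^1(\mathbb{R}),\psi\not\equiv0}\int_{\mathbb{R}}g\bar\rho'\psi^2dx_3/\int_{\mathbb{R}}|\psi'|^2dx_3}\in(0,\infty]$. Horizontal case ($M\neq0$ constant): for $0<|M\xi_1|/|\xi|<M_{\mathrm c}$, $S(\xi):=\sqrt{\sup_{\psi\in H^1,\psi\not\equiv0}\big(g|\xi|^2\int\bar\rho'\psi^2/(M\xi_1)^2-\int|\psi'|^2\big)/\int|\psi|^2}$; $\mathbb{A}^{\mathrm g}:=\big(\{\xi: |\xi_1M|/|\xi|\in(0,M_{\mathrm c}),\ |\xi|<S(\xi)\}\cup\{\xi_1=0\}\big)\setminus\{\mathbf 0\}$; and $E_0(\psi):=\int_{\mathbb{R}}\big[M^2\xi_1^2(|\psi|^2+|\psi'|^2/|\xi|^2)-g\bar\rho'\psi^2\big]dx_3$. Vertical case ($M$ constant with $|M|\in(0,M_{\mathrm c})$): $\mathcal M_{\mathrm{vc}}:=\{\psi\in H^2(\mathbb{R}):\int(g\bar\rho'\psi^2-M^2|\psi'|^2)dx_3>0\}$, $|\xi|^M_{\mathrm{vc}}:=\sqrt{\inf_{\psi\in\mathcal M_{\mathrm{vc}}}M^2\int|\psi''|^2/\int(g\bar\rho'\psi^2-M^2|\psi'|^2)}$, $\mathbb{A}^{\mathrm g}:=\{\xi:|\xi|^M_{\mathrm{vc}}<|\xi|\}$,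 and $E_0(\psi):=\int_{\mathbb{R}}\big[M^2(|\psi'|^2+|\psi''|^2/|\xi|^2)-g\bar\rho'\psi^2\big]dx_3$. *)

theory Defs
  imports "HOL-Analysis.Analysis"
begin

text \<open>A function psi : R -> R is in H^1(R) with (weak) derivative dpsi iff psi and dpsi are
square integrable and psi is the indefinite integral of dpsi (i.e. psi is the locally
absolutely continuous representative).\<close>

definition H1 :: "(real \<Rightarrow> real) \<Rightarrow> (real \<Rightarrow> real) \<Rightarrow> bool" where
  "H1 psi dpsi \<longleftrightarrow>
     psi \<in> borel_measurable lborel \<and> dpsi \<in> borel_measurable lborel \<and>
     integrable lborel (\<lambda>x. (psi x)\<^sup>2) \<and> integrable lborel (\<lambda>x. (dpsi x)\<^sup>2) \<and>
     (\<forall>a b. a \<le> b \<longrightarrow> set_integrable lborel {a..b} dpsi \<and>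
        psi b - psi a = (LINT t:{a..b}|lborel. dpsi t))"

definition H2 :: "(real \<Rightarrow> real) \<Rightarrow> (real \<Rightarrow> real) \<Rightarrow> (real \<Rightarrow> real) \<Rightarrow> bool" where
  "H2 psi dpsi ddpsi \<longleftrightarrow> H1 psi dpsi \<and> H1 dpsi ddpsi"

definition smooth_fun :: "(real \<Rightarrow> real) \<Rightarrow> bool" where
  "smooth_fun f \<longleftrightarrow> (\<forall>k x. ((deriv ^^ k) f) differentiable (at x))"

definition Mc_sq :: "real \<Rightarrow> (real \<Rightarrow> real) \<Rightarrow> ereal" where
  "Mc_sq g drho = (SUP p \<in> {(psi, dpsi). H1 psi dpsi \<and> psi \<noteq> (\<lambda>_. 0)}.
      ereal ((LINT x|lborel. g * drho x * (fst p x)\<^sup>2) / (LINT x|lborel. (snd p x)\<^sup>2)))"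

definition Mc :: "real \<Rightarrow> (real \<Rightarrow> real) \<Rightarrow> ereal" where
  "Mc g drho = (if Mc_sq g drho = \<infinity> then \<infinity> else ereal (sqrt (real_of_ereal (Mc_sq g drho))))"

definition S_hor :: "real \<Rightarrow> (real \<Rightarrow> real) \<Rightarrow> real \<Rightarrow> real \<times> real \<Rightarrow> real" where
  "S_hor g drho M xi = sqrt (Sup ((\<lambda>(psi, dpsi).
      (g * (norm xi)\<^sup>2 * (LINT x|lborel. drho x * (psi x)\<^sup>2) / (M * fst xi)\<^sup>2
        - (LINT x|lborel. (dpsi x)\<^sup>2)) / (LINT x|lborel. (psi x)\<^sup>2))
      ` {(psi, dpsi). H1 psi dpsi \<and> psi \<noteq> (\<lambda>_. 0)}))"

definition Ag_hor :: "real \<Rightarrow> (real \<Rightarrow> real) \<Rightarrow> real \<Rightarrow> (real \<times> real) set" where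
  "Ag_hor g drho M = ({xi. 0 < \<bar>M * fst xi\<bar> / norm xi \<and>
                          ereal (\<bar>M * fst xi\<bar> / norm xi) < Mc g drho \<and>
                          norm xi < S_hor g drho M xi}
                     \<union> {xi. fst xi = 0}) - {0}"

definition E0_hor :: "real \<Rightarrow> (real \<Rightarrow> real) \<Rightarrow> real \<Rightarrow> real \<times> real
                       \<Rightarrow> (real \<Rightarrow> real) \<Rightarrow> (real \<Rightarrow> real) \<Rightarrow> real" where
  "E0_hor g drho M xi psi dpsi = (LINT x|lborel.
      M\<^sup>2 * (fst xi)\<^sup>2 * ((psi x)\<^sup>2 + (dpsi x)\<^sup>2 / (norm xi)\<^sup>2) - g * drho x * (psi x)\<^sup>2)"

definition Mvc :: "real \<Rightarrow> (real \<Rightarrow> real) \<Rightarrow> real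
                    \<Rightarrow> ((real \<Rightarrow> real) \<times> (real \<Rightarrow> real) \<times> (real \<Rightarrow> real)) set" where
  "Mvc g drho M = {(psi, dpsi, ddpsi). H2 psi dpsi ddpsi \<and>
      (LINT x|lborel. g * drho x * (psi x)\<^sup>2 - M\<^sup>2 * (dpsi x)\<^sup>2) > 0}"

definition xi_vc :: "real \<Rightarrow> (real \<Rightarrow> real) \<Rightarrow> real \<Rightarrow> real" where
  "xi_vc g drho M = sqrt (Inf ((\<lambda>(psi, dpsi, ddpsi).
      M\<^sup>2 * (LINT x|lborel. (ddpsi x)\<^sup>2) /
        (LINT x|lborel. g * drho x * (psi x)\<^sup>2 - M\<^sup>2 * (dpsi x)\<^sup>2)) ` Mvc g drho M))"

definition Ag_ver :: "real \<Rightarrow> (real \<Rightarrow> real) \<Rightarrow> real \<Rightarrow> (real \<times> real) set" where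
  "Ag_ver g drho M = {xi. xi_vc g drho M < norm xi}"

definition E0_ver :: "real \<Rightarrow> (real \<Rightarrow> real) \<Rightarrow> real \<Rightarrow> real \<times> real
                       \<Rightarrow> (real \<Rightarrow> real) \<Rightarrow> (real \<Rightarrow> real) \<Rightarrow> (real \<Rightarrow> real) \<Rightarrow> real" where
  "E0_ver g drho M xi psi dpsi ddpsi = (LINT x|lborel.
      M\<^sup>2 * ((dpsi x)\<^sup>2 + (ddpsi x)\<^sup>2 / (norm xi)\<^sup>2) - g * drho x * (psi x)\<^sup>2)"

end

theory Submission
  imports Defs
begin

(*
  For xi_1 = 0 the horizontal energy is just -g int rho' psi^2.  Otherwise both dichotomies
  come from writing E0, for admissible psi, as a positive multiple of the difference between
  |xi|^2 and a Rayleigh quotient: in the horizontal case the quotient whose supremum is S(xi)^2,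
  in the vertical case the quotient whose infimum over M_vc is (|xi|^M_vc)^2.  So xi in A^g
  produces a quotient on the unstable side of |xi|^2 and hence E0 < 0, while outside A^g every
  quotient stays on the stable side and E0 >= 0; when |M xi_1| / |xi| >= M_c the bound
  g int rho' psi^2 <= M_c^2 int |psi'|^2 defining M_c gives E0 >= 0 directly.

  The analytic input is the existence of enough admissible test functions.  The sliding average
  (1/h) int_x^(x+h) f maps L^2 into H^1 with the difference quotient as derivative, and does
  not increase L^2 norms.  Averaging an indicator gives a tent function with int rho' psi^2 > 0;
  averaging an H^1 function gives an H^2 function that is uniformly close to it (by
  Cauchy-Schwarz, |psi t - psi x|^2 <= |t - x| int |psi'|^2), which shows that the set M_vc
  is nonempty whenever |M| < M_c.
*)

lemma abs_le_square_plus_one: "\<bar>y\<bar> \<le> y\<^sup>2 + (1::real)"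
  using sum_squares_bound[of "\<bar>y\<bar>" 1] by simp

lemma square_integrable_imp_set_integrable_Icc:
  fixes f :: "real \<Rightarrow> real"
  assumes f: "f \<in> borel_measurable lborel" and f2: "integrable lborel (\<lambda>x. (f x)\<^sup>2)"
  shows "set_integrable lborel {a..b} f"
  unfolding set_integrable_def
proof (rule Bochner_Integration.integrable_bound)
  show "integrable lborel (\<lambda>x. (f x)\<^sup>2 + indicator {a..b} x)"
    using f2 by (intro Bochner_Integration.integrable_add integrable_real_indicator)
      (auto simp: emeasure_lborel_Icc_eq)
  show "AE x in lborel. norm (indicator {a..b} x *\<^sub>R f x) \<le> norm ((f x)\<^sup>2 + indicator {a..b} x)"
    using abs_le_square_plus_one by (auto simp: indicator_def)
qed (use f in measurable)

lemma square_integrable_imp_set_integrable_square: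
  fixes f :: "real \<Rightarrow> real"
  assumes "integrable lborel (\<lambda>x. (f x)\<^sup>2)" and "A \<in> sets borel"
  shows "set_integrable lborel A (\<lambda>x. (f x)\<^sup>2)"
  unfolding set_integrable_def using assms by (intro integrable_mult_indicator) auto

lemma set_integral_square_le_integral:
  fixes f :: "real \<Rightarrow> real"
  assumes "integrable lborel (\<lambda>x. (f x)\<^sup>2)"
  shows "(LINT t:{a..b}|lborel. (f t)\<^sup>2) \<le> (LINT t|lborel. (f t)\<^sup>2)"
  using assms square_integrable_imp_set_integrable_square[OF assms, of "{a..b}"]
  unfolding set_lebesgue_integral_def set_integrable_def
  by (intro integral_mono) (auto simp: indicator_def)

lemma set_integral_Icc_square_le:
  fixes f :: "real \<Rightarrow> real"
  assumes ab: "a < b" and f: "set_integrable lborel {a..b} f"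
    and f2: "set_integrable lborel {a..b} (\<lambda>t. (f t)\<^sup>2)"
  shows "(LINT t:{a..b}|lborel. f t)\<^sup>2 \<le> (b - a) * (LINT t:{a..b}|lborel. (f t)\<^sup>2)"
proof -
  define I where "I = (LINT t:{a..b}|lborel. f t)"
  define J where "J = (LINT t:{a..b}|lborel. (f t)\<^sup>2)"
  define L where "L = b - a"
  define m where "m = I / L"
  have L: "L > 0" using ab by (simp add: L_def)
  let ?ind = "indicator {a..b} :: real \<Rightarrow> real"
  have ind: "integrable lborel ?ind" using ab by (intro integrable_real_indicator) auto
  have "(\<lambda>t. ?ind t * (f t - m)\<^sup>2) = (\<lambda>t. ?ind t * (f t)\<^sup>2 - (2 * m) * (?ind t * f t) + m\<^sup>2 * ?ind t)"
    by (auto simp: power2_eq_square algebra_simps)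
  then have "(LINT t|lborel. ?ind t * (f t - m)\<^sup>2) = J - 2 * m * I + m\<^sup>2 * L"
    using f f2 ind ab unfolding I_def J_def L_def set_integrable_def set_lebesgue_integral_def by simp
  moreover have "0 \<le> (LINT t|lborel. ?ind t * (f t - m)\<^sup>2)"
    by (rule integral_nonneg_AE) auto
  moreover have "J - 2 * m * I + m\<^sup>2 * L = J - I\<^sup>2 / L"
    using L unfolding m_def by (simp add: field_simps power2_eq_square)
  ultimately have "I\<^sup>2 / L \<le> J" by simp
  then show ?thesis using L unfolding I_def J_def L_def by (simp add: pos_divide_le_eq mult.commute)
qed

lemma integrable_bounded_mult_square:
  fixes w p :: "real \<Rightarrow> real"
  assumes w: "w \<in> borel_measurable lborel" and wB: "\<And>x. \<bar>w x\<bar> \<le> B"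
    and p: "p \<in> borel_measurable lborel" and p2: "integrable lborel (\<lambda>x. (p x)\<^sup>2)"
  shows "integrable lborel (\<lambda>x. w x * (p x)\<^sup>2)"
proof (rule Bochner_Integration.integrable_bound)
  show "integrable lborel (\<lambda>x. B * (p x)\<^sup>2)" using p2 by simp
  show "AE x in lborel. norm (w x * (p x)\<^sup>2) \<le> norm (B * (p x)\<^sup>2)"
    using wB order_trans[OF abs_ge_zero wB] by (auto simp: abs_mult intro!: mult_right_mono)
qed (use w p in measurable)

lemma abs_integral_bounded_mult_square_le:
  fixes w p :: "real \<Rightarrow> real"
  assumes w: "w \<in> borel_measurable lborel" and wB: "\<And>x. \<bar>w x\<bar> \<le> B"
    and p: "p \<in> borel_measurable lborel" and p2: "integrable lborel (\<lambda>x. (p x)\<^sup>2)"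
  shows "\<bar>LINT x|lborel. w x * (p x)\<^sup>2\<bar> \<le> B * (LINT x|lborel. (p x)\<^sup>2)"
proof -
  have "\<bar>LINT x|lborel. w x * (p x)\<^sup>2\<bar> \<le> (LINT x|lborel. B * (p x)\<^sup>2)"
    using integrable_bounded_mult_square[OF assms] p2 wB
    by (intro integral_abs_bound_integral) (auto simp: abs_mult intro!: mult_right_mono)
  then show ?thesis by simp
qed

lemma integrable_square_diff_quotient:
  fixes f :: "real \<Rightarrow> real"
  assumes f[measurable]: "f \<in> borel_measurable borel" and f2: "integrable lborel (\<lambda>x. (f x)\<^sup>2)"
  shows "integrable lborel (\<lambda>x. ((f (x + h) - f x) / h)\<^sup>2)"
proof (rule Bochner_Integration.integrable_bound)
  have "integrable lborel (\<lambda>x. (f (x + h))\<^sup>2)"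
    using lborel_integrable_real_affine[OF f2, of 1 h] by (simp add: add.commute)
  then show "integrable lborel (\<lambda>x. (2 * (f (x + h))\<^sup>2 + 2 * (f x)\<^sup>2) / h\<^sup>2)"
    using f2 by (intro integrable_divide_zero Bochner_Integration.integrable_add integrable_mult_right)
  have "(u - v)\<^sup>2 \<le> 2 * u\<^sup>2 + 2 * v\<^sup>2" for u v :: real
    using sum_squares_bound[of u "-v"] by (simp add: power2_diff)
  then show "AE x in lborel. norm (((f (x + h) - f x) / h)\<^sup>2) \<le> norm ((2 * (f (x + h))\<^sup>2 + 2 * (f x)\<^sup>2) / h\<^sup>2)"
    by (auto simp: power_divide intro!: divide_right_mono)
qed measurable

section \<open>Sliding averages\<close>

definition sliding_avg :: "real \<Rightarrow> (real \<Rightarrow> real) \<Rightarrow> real \<Rightarrow> real" where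
  "sliding_avg h f x = (LINT t:{x..x+h}|lborel. f t) / h"

lemma borel_measurable_sliding_avg:
  fixes f :: "real \<Rightarrow> real"
  assumes [measurable]: "f \<in> borel_measurable borel"
  shows "sliding_avg h f \<in> borel_measurable borel"
proof -
  have "(\<lambda>(x, t). indicator {x..x+h} t *\<^sub>R f t)
      = (\<lambda>p::real \<times> real. if fst p \<le> snd p \<and> snd p \<le> fst p + h then f (snd p) else 0)"
    by (auto simp: indicator_def)
  also have "\<dots> \<in> borel_measurable (lborel \<Otimes>\<^sub>M lborel)" by measurable
  finally have "(\<lambda>x. LINT t|lborel. indicator {x..x+h} t *\<^sub>R f t) \<in> borel_measurable lborel"
    by (intro lborel.borel_measurable_lebesgue_integral) simp
  then show ?thesis unfolding sliding_avg_def set_lebesgue_integral_def by simp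
qed

lemma nn_integral_window:
  fixes u :: "real \<Rightarrow> ennreal"
  assumes [measurable]: "u \<in> borel_measurable borel" and h: "0 \<le> h"
  shows "(\<integral>\<^sup>+x. (\<integral>\<^sup>+t. indicator {x..x+h} t * u t \<partial>lborel) \<partial>lborel)
    = ennreal h * (\<integral>\<^sup>+t. u t \<partial>lborel)"
proof -
  define G where "G x s = indicator {0..h} s * u (x + s)" for x s :: real
  have [measurable]: "case_prod G \<in> borel_measurable (lborel \<Otimes>\<^sub>M lborel)"
    unfolding G_def by measurable
  have inner: "(\<integral>\<^sup>+t. indicator {x..x+h} t * u t \<partial>lborel) = (\<integral>\<^sup>+s. G x s \<partial>lborel)" for x
    using nn_integral_real_affine[of "\<lambda>t. indicator {x..x+h} t * u t" 1 x]
    unfolding G_def by (simp add: indicator_def add.commute)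
  have swapped: "(\<integral>\<^sup>+x. G x s \<partial>lborel) = (\<integral>\<^sup>+t. u t \<partial>lborel) * indicator {0..h} s" for s
    using nn_integral_real_affine[of u 1 s] unfolding G_def
    by (subst nn_integral_cmult) (simp_all add: add.commute mult.commute)
  have "(\<integral>\<^sup>+x. (\<integral>\<^sup>+s. G x s \<partial>lborel) \<partial>lborel) = (\<integral>\<^sup>+s. (\<integral>\<^sup>+x. G x s \<partial>lborel) \<partial>lborel)"
    by (rule lborel_pair.Fubini'[symmetric]) measurable
  also have "\<dots> = ennreal h * (\<integral>\<^sup>+t. u t \<partial>lborel)"
    unfolding swapped using h by (subst nn_integral_cmult_indicator) (auto simp: mult.commute)
  finally show ?thesis unfolding inner .
qed

lemma nn_integral_sliding_avg:
  fixes f :: "real \<Rightarrow> real"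
  assumes f[measurable]: "f \<in> borel_measurable borel" and nonneg: "\<And>x. 0 \<le> f x"
    and f1: "integrable lborel f" and h: "h > 0"
  shows "(\<integral>\<^sup>+x. ennreal (sliding_avg h f x) \<partial>lborel) = (\<integral>\<^sup>+x. ennreal (f x) \<partial>lborel)"
proof -
  have [measurable]: "sliding_avg h f \<in> borel_measurable borel"
    by (rule borel_measurable_sliding_avg) measurable
  have window: "ennreal (h * sliding_avg h f x)
      = (\<integral>\<^sup>+t. indicator {x..x+h} t * ennreal (f t) \<partial>lborel)" for x
  proof -
    have "integrable lborel (\<lambda>t. indicator {x..x+h} t * f t)"
      using integrable_real_mult_indicator[OF _ f1, of "{x..x+h}"] by (simp add: mult.commute)
    then have "ennreal (h * sliding_avg h f x)
        = (\<integral>\<^sup>+t. ennreal (indicator {x..x+h} t * f t) \<partial>lborel)"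
      using h nonneg unfolding sliding_avg_def set_lebesgue_integral_def
      by (subst nn_integral_eq_integral) auto
    also have "\<dots> = (\<integral>\<^sup>+t. indicator {x..x+h} t * ennreal (f t) \<partial>lborel)"
      by (intro nn_integral_cong) (simp add: indicator_def)
    finally show ?thesis .
  qed
  have "(\<integral>\<^sup>+x. ennreal (sliding_avg h f x) \<partial>lborel)
      = (\<integral>\<^sup>+x. ennreal (1 / h) * ennreal (h * sliding_avg h f x) \<partial>lborel)"
    using h by (intro nn_integral_cong) (simp add: ennreal_mult'[symmetric])
  also have "\<dots> = ennreal (1 / h) * (\<integral>\<^sup>+x. ennreal (h * sliding_avg h f x) \<partial>lborel)"
    by (rule nn_integral_cmult) measurable
  also have "\<dots> = ennreal (1 / h) * ennreal h * (\<integral>\<^sup>+x. ennreal (f x) \<partial>lborel)"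
    unfolding window using nn_integral_window[of "\<lambda>t. ennreal (f t)" h] h by (simp add: mult.assoc)
  also have "\<dots> = (\<integral>\<^sup>+x. ennreal (f x) \<partial>lborel)"
    using h by (simp add: ennreal_mult'[symmetric])
  finally show ?thesis .
qed

lemma
  fixes f :: "real \<Rightarrow> real"
  assumes f[measurable]: "f \<in> borel_measurable borel" and nonneg: "\<And>x. 0 \<le> f x"
    and f1: "integrable lborel f" and h: "h > 0"
  shows integrable_sliding_avg: "integrable lborel (sliding_avg h f)"
    and integral_sliding_avg: "(LINT x|lborel. sliding_avg h f x) = (LINT x|lborel. f x)"
proof -
  have "(\<integral>\<^sup>+x. ennreal (sliding_avg h f x) \<partial>lborel) = ennreal (LINT x|lborel. f x)"
    using nn_integral_sliding_avg[OF f nonneg f1 h] f1 nonneg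
    by (simp add: nn_integral_eq_integral)
  moreover have "0 \<le> sliding_avg h f x" for x
    using h nonneg unfolding sliding_avg_def set_lebesgue_integral_def
    by (intro divide_nonneg_pos integral_nonneg_AE) auto
  moreover have "0 \<le> (LINT x|lborel. f x)"
    using nonneg by (simp add: integral_nonneg_AE)
  ultimately have "integrable lborel (sliding_avg h f)
      \<and> (LINT x|lborel. sliding_avg h f x) = (LINT x|lborel. f x)"
    using borel_measurable_sliding_avg[OF f] by (subst (asm) nn_integral_eq_integrable) auto
  then show "integrable lborel (sliding_avg h f)"
    and "(LINT x|lborel. sliding_avg h f x) = (LINT x|lborel. f x)" by auto
qed

lemma sliding_avg_square_le:
  fixes f :: "real \<Rightarrow> real"
  assumes f: "f \<in> borel_measurable lborel" and f2: "integrable lborel (\<lambda>x. (f x)\<^sup>2)" and h: "h > 0"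
  shows "(sliding_avg h f x)\<^sup>2 \<le> sliding_avg h (\<lambda>t. (f t)\<^sup>2) x"
proof -
  have "(LINT t:{x..x+h}|lborel. f t)\<^sup>2 \<le> h * (LINT t:{x..x+h}|lborel. (f t)\<^sup>2)"
    using set_integral_Icc_square_le[of x "x + h" f] h
      square_integrable_imp_set_integrable_Icc[OF f f2]
      square_integrable_imp_set_integrable_square[OF f2] by simp
  then show ?thesis
    using h unfolding sliding_avg_def by (simp add: field_simps power2_eq_square)
qed

lemma
  fixes f :: "real \<Rightarrow> real"
  assumes f[measurable]: "f \<in> borel_measurable borel"
    and f2: "integrable lborel (\<lambda>x. (f x)\<^sup>2)" and h: "h > 0"
  shows integrable_sliding_avg_square: "integrable lborel (\<lambda>x. (sliding_avg h f x)\<^sup>2)"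
    and integral_sliding_avg_square_le:
      "(LINT x|lborel. (sliding_avg h f x)\<^sup>2) \<le> (LINT x|lborel. (f x)\<^sup>2)"
proof -
  have [measurable]: "sliding_avg h f \<in> borel_measurable borel"
    by (rule borel_measurable_sliding_avg) measurable
  have avg2: "integrable lborel (sliding_avg h (\<lambda>t. (f t)\<^sup>2))"
    by (rule integrable_sliding_avg[OF _ _ f2 h]) auto
  have le: "(sliding_avg h f x)\<^sup>2 \<le> sliding_avg h (\<lambda>t. (f t)\<^sup>2) x" for x
    by (rule sliding_avg_square_le[OF _ f2 h]) simp
  show int: "integrable lborel (\<lambda>x. (sliding_avg h f x)\<^sup>2)"
  proof (rule Bochner_Integration.integrable_bound[OF avg2])
    show "AE x in lborel. norm ((sliding_avg h f x)\<^sup>2) \<le> norm (sliding_avg h (\<lambda>t. (f t)\<^sup>2) x)"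
      using le by (intro AE_I2) (metis abs_ge_self order_trans real_norm_def norm_power abs_power2)
  qed measurable
  have "(LINT x|lborel. (sliding_avg h f x)\<^sup>2) \<le> (LINT x|lborel. sliding_avg h (\<lambda>t. (f t)\<^sup>2) x)"
    using int avg2 le by (rule integral_mono)
  also have "\<dots> = (LINT x|lborel. (f x)\<^sup>2)"
    by (rule integral_sliding_avg[OF _ _ f2 h]) auto
  finally show "(LINT x|lborel. (sliding_avg h f x)\<^sup>2) \<le> (LINT x|lborel. (f x)\<^sup>2)" .
qed

lemma set_integral_Icc_shift:
  fixes f :: "real \<Rightarrow> real"
  shows "(LINT x:{a..b}|lborel. f (x + h)) = (LINT x:{a+h..b+h}|lborel. f x)"
proof -
  have "(LINT x:{a+h..b+h}|lborel. f x)
      = (LINT x|lborel. indicator {a+h..b+h} (h + 1 * x) * f (h + 1 * x))"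
    using lborel_integral_real_affine[of 1 "\<lambda>x. indicator {a+h..b+h} x * f x" h]
    by (simp add: set_lebesgue_integral_def)
  also have "\<dots> = (LINT x|lborel. indicator {a..b} x * f (x + h))"
    by (intro Bochner_Integration.integral_cong) (auto simp: indicator_def add.commute)
  finally show ?thesis by (simp add: set_lebesgue_integral_def)
qed

lemma set_integral_Icc_eq_interval_integral_diff:
  fixes f :: "real \<Rightarrow> real"
  assumes f: "\<And>a b. set_integrable lborel {a..b} f" and cd: "c \<le> d"
  shows "(LINT t:{c..d}|lborel. f t) = (LBINT t=ereal 0..ereal d. f t) - (LBINT t=ereal 0..ereal c. f t)"
proof -
  have f_int: "interval_lebesgue_integrable lborel (ereal u) (ereal v) f" for u v
    using set_integrable_subset[OF f[of "min u v" "max u v"]]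
    unfolding interval_lebesgue_integrable_def by (auto simp: einterval_iff subset_iff)
  have "(LBINT t=ereal 0..ereal c. f t) + (LBINT t=ereal c..ereal d. f t) = (LBINT t=ereal 0..ereal d. f t)"
    by (intro interval_integral_sum) (metis f_int min_def max_def)
  then show ?thesis using cd by (simp add: interval_integral_Icc)
qed

lemma sliding_avg_diff:
  fixes f :: "real \<Rightarrow> real"
  assumes f[measurable]: "f \<in> borel_measurable borel"
    and f2: "integrable lborel (\<lambda>x. (f x)\<^sup>2)" and h: "h > 0" and ab: "a \<le> b"
  shows "sliding_avg h f b - sliding_avg h f a = (LINT x:{a..b}|lborel. (f (x + h) - f x) / h)"
proof -
  have f_loc: "set_integrable lborel {a..b} f" for a b
    by (rule square_integrable_imp_set_integrable_Icc[OF _ f2]) simp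
  have "set_integrable lborel {a..b} (\<lambda>x. f (x + h))" for a b
    using lborel_integrable_real_affine[OF f2, of 1 h]
    by (intro square_integrable_imp_set_integrable_Icc) (simp_all add: add.commute)
  define P where "P y = (LBINT t=ereal 0..ereal y. f t)" for y :: real
  have P: "c \<le> d \<Longrightarrow> (LINT t:{c..d}|lborel. f t) = P d - P c" for c d
    unfolding P_def by (rule set_integral_Icc_eq_interval_integral_diff[OF f_loc])
  have "(LINT x:{a..b}|lborel. (f (x + h) - f x) / h)
      = ((LINT x:{a..b}|lborel. f (x + h)) - (LINT x:{a..b}|lborel. f x)) / h"
    using f_loc \<open>set_integrable lborel {a..b} (\<lambda>x. f (x + h))\<close>
    by simp
  also have "\<dots> = ((P (b+h) - P (a+h)) - (P b - P a)) / h"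
    using ab by (simp add: set_integral_Icc_shift P)
  also have "\<dots> = sliding_avg h f b - sliding_avg h f a"
    using h by (simp add: sliding_avg_def P diff_divide_distrib)
  finally show ?thesis ..
qed

lemma H1_sliding_avg:
  fixes f :: "real \<Rightarrow> real"
  assumes f[measurable]: "f \<in> borel_measurable borel"
    and f2: "integrable lborel (\<lambda>x. (f x)\<^sup>2)" and h: "h > 0"
  shows "H1 (sliding_avg h f) (\<lambda>x. (f (x + h) - f x) / h)"
  unfolding H1_def
proof (intro conjI allI impI)
  show "sliding_avg h f \<in> borel_measurable lborel"
    using borel_measurable_sliding_avg[OF f] by simp
  show dq: "(\<lambda>x. (f (x + h) - f x) / h) \<in> borel_measurable lborel" by measurable
  show "integrable lborel (\<lambda>x. (sliding_avg h f x)\<^sup>2)"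
    by (rule integrable_sliding_avg_square[OF f f2 h])
  show dq2: "integrable lborel (\<lambda>x. ((f (x + h) - f x) / h)\<^sup>2)"
    by (rule integrable_square_diff_quotient[OF f f2])
  fix a b :: real assume "a \<le> b"
  then show "sliding_avg h f b - sliding_avg h f a = (LINT t:{a..b}|lborel. (f (t + h) - f t) / h)"
    by (rule sliding_avg_diff[OF f f2 h])
  show "set_integrable lborel {a..b} (\<lambda>x. (f (x + h) - f x) / h)"
    by (rule square_integrable_imp_set_integrable_Icc[OF dq dq2])
qed

lemma sliding_avg_indicator:
  fixes c d x :: real
  assumes d: "d > 0"
  shows "sliding_avg d (indicator {c..c+d}) x = measure lborel {max x c..min (x+d) (c+d)} / d"
proof -
  have "(LINT t:{x..x+d}|lborel. indicator {c..c+d} t) = (LINT t|lborel. indicator ({x..x+d} \<inter> {c..c+d}) t :: real)"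
    unfolding set_lebesgue_integral_def
    by (intro Bochner_Integration.integral_cong) (auto simp: indicator_def)
  then show ?thesis
    by (simp add: sliding_avg_def sup_real_def inf_real_def)
qed

lemma sliding_avg_indicator_ge_half:
  fixes c d x :: real
  assumes d: "d > 0" and x: "\<bar>x - c\<bar> \<le> d / 2"
  shows "1 / 2 \<le> sliding_avg d (indicator {c..c+d}) x"
proof -
  have "d / 2 \<le> measure lborel {max x c..min (x+d) (c+d)}"
    using d x by (subst measure_lborel_Icc) (auto simp: min_def max_def)
  then show ?thesis using d by (simp add: sliding_avg_indicator field_simps)
qed

lemma sliding_avg_indicator_eq_0:
  fixes c d x :: real
  assumes d: "d > 0" and x: "d \<le> \<bar>x - c\<bar>"
  shows "sliding_avg d (indicator {c..c+d}) x = 0"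
  using d x by (simp add: sliding_avg_indicator) (auto simp: min_def max_def)

lemma H1_sliding_avg_indicator:
  fixes c d :: real
  assumes d: "d > 0"
  shows "H1 (sliding_avg d (indicator {c..c+d}))
    (\<lambda>x. (indicator {c..c+d} (x + d) - indicator {c..c+d} x) / d)"
proof (rule H1_sliding_avg[OF _ _ d])
  have "(\<lambda>x. (indicator {c..c+d} x :: real)\<^sup>2) = indicator {c..c+d}"
    by (auto simp: indicator_def)
  then show "integrable lborel (\<lambda>x. (indicator {c..c+d} x :: real)\<^sup>2)" using d by simp
qed simp

lemma H1_diff_eq_integral:
  "H1 psi dpsi \<Longrightarrow> a \<le> b \<Longrightarrow> psi b - psi a = (LINT t:{a..b}|lborel. dpsi t)"
  unfolding H1_def by blast

lemma H1_diff_square_le: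
  assumes H: "H1 psi dpsi" and xt: "x \<le> t"
  shows "(psi t - psi x)\<^sup>2 \<le> (t - x) * (LINT s|lborel. (dpsi s)\<^sup>2)"
proof (cases "x = t")
  case False
  have dpsi: "dpsi \<in> borel_measurable lborel" and dpsi2: "integrable lborel (\<lambda>s. (dpsi s)\<^sup>2)"
    using H unfolding H1_def by auto
  have "(psi t - psi x)\<^sup>2 = (LINT s:{x..t}|lborel. dpsi s)\<^sup>2"
    using H1_diff_eq_integral[OF H xt] by simp
  also have "\<dots> \<le> (t - x) * (LINT s:{x..t}|lborel. (dpsi s)\<^sup>2)"
    using False xt square_integrable_imp_set_integrable_Icc[OF dpsi dpsi2]
      square_integrable_imp_set_integrable_square[OF dpsi2]
    by (intro set_integral_Icc_square_le) auto
  also have "\<dots> \<le> (t - x) * (LINT s|lborel. (dpsi s)\<^sup>2)"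
    using xt set_integral_square_le_integral[OF dpsi2] by (intro mult_left_mono) auto
  finally show ?thesis .
qed simp

lemma H1_sliding_avg_dist_le:
  assumes H: "H1 psi dpsi" and h: "h > 0"
  shows "\<bar>sliding_avg h psi x - psi x\<bar> \<le> sqrt (h * (LINT s|lborel. (dpsi s)\<^sup>2))"
proof -
  define r where "r = sqrt (h * (LINT s|lborel. (dpsi s)\<^sup>2))"
  have psi: "psi \<in> borel_measurable lborel" and psi2: "integrable lborel (\<lambda>s. (psi s)\<^sup>2)"
    using H unfolding H1_def by auto
  have const: "set_integrable lborel {x..x+h} (\<lambda>s. c)" for c :: real
    using h by (simp add: set_integrable_def)
  have diff: "set_integrable lborel {x..x+h} (\<lambda>s. psi s - psi x)"
    using square_integrable_imp_set_integrable_Icc[OF psi psi2] const by auto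
  have "\<bar>psi s - psi x\<bar> \<le> r" if "s \<in> {x..x+h}" for s
  proof -
    have "(psi s - psi x)\<^sup>2 \<le> (s - x) * (LINT s|lborel. (dpsi s)\<^sup>2)"
      using H1_diff_square_le[OF H, of x s] that by simp
    also have "\<dots> \<le> h * (LINT s|lborel. (dpsi s)\<^sup>2)"
      using that by (intro mult_right_mono) auto
    finally have "(psi s - psi x)\<^sup>2 \<le> h * (LINT s|lborel. (dpsi s)\<^sup>2)" .
    then show ?thesis unfolding r_def by (simp add: real_le_rsqrt)
  qed
  then have "\<bar>LINT s:{x..x+h}|lborel. psi s - psi x\<bar> \<le> (LINT s:{x..x+h}|lborel. r)"
    using diff const unfolding set_lebesgue_integral_def set_integrable_def
    by (intro integral_abs_bound_integral) (auto simp: indicator_def)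
  moreover have "(LINT s:{x..x+h}|lborel. psi s - psi x) = h * (sliding_avg h psi x - psi x)"
    using square_integrable_imp_set_integrable_Icc[OF psi psi2] const h
    by (simp add: sliding_avg_def set_integral_const field_simps)
  ultimately show ?thesis using h unfolding r_def by (simp add: abs_mult set_integral_const)
qed

lemma H1_sliding_avg_deriv:
  assumes "H1 psi dpsi" and "h > 0"
  shows "sliding_avg h dpsi = (\<lambda>x. (psi (x + h) - psi x) / h)"
  using H1_diff_eq_integral[OF assms(1)] assms(2) by (auto simp: sliding_avg_def)

lemma H2_sliding_avg:
  assumes H: "H1 psi dpsi" and h: "h > 0"
  shows "H2 (sliding_avg h psi) (\<lambda>x. (psi (x + h) - psi x) / h) (\<lambda>x. (dpsi (x + h) - dpsi x) / h)"
proof -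
  have "psi \<in> borel_measurable borel" "integrable lborel (\<lambda>x. (psi x)\<^sup>2)"
    "dpsi \<in> borel_measurable borel" "integrable lborel (\<lambda>x. (dpsi x)\<^sup>2)"
    using H unfolding H1_def by auto
  from H1_sliding_avg[OF this(1,2) h] H1_sliding_avg[OF this(3,4) h] show ?thesis
    unfolding H2_def H1_sliding_avg_deriv[OF H h] by blast
qed

lemma H1_uniform_approx_H2:
  assumes H: "H1 psi dpsi" and n: "n > 0"
  obtains a d dd where "H2 a d dd" "\<And>x. \<bar>a x - psi x\<bar> \<le> n"
    "(LINT x|lborel. (d x)\<^sup>2) \<le> (LINT x|lborel. (dpsi x)\<^sup>2)"
proof -
  define K where "K = (LINT x|lborel. (dpsi x)\<^sup>2)"
  define h where "h = n\<^sup>2 / (K + 1)"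
  have K: "K \<ge> 0" unfolding K_def by simp
  have h: "h > 0" unfolding h_def using K n by simp
  have "h * K \<le> n\<^sup>2"
    unfolding h_def using K by (simp add: field_simps)
  then have "sqrt (h * K) \<le> n"
    using n by (simp add: real_le_lsqrt)
  then have close: "\<bar>sliding_avg h psi x - psi x\<bar> \<le> n" for x
    using H1_sliding_avg_dist_le[OF H h, of x] unfolding K_def by linarith
  have dpsi: "dpsi \<in> borel_measurable borel" and dpsi2: "integrable lborel (\<lambda>x. (dpsi x)\<^sup>2)"
    using H unfolding H1_def by auto
  have "(LINT x|lborel. ((psi (x + h) - psi x) / h)\<^sup>2) \<le> K"
    using integral_sliding_avg_square_le[OF dpsi dpsi2 h]
    unfolding K_def H1_sliding_avg_deriv[OF H h] .
  with H2_sliding_avg[OF H h] close show ?thesis unfolding K_def by (rule that)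
qed

lemma integrable_const_lborel_iff: "integrable lborel (\<lambda>_::real. c) \<longleftrightarrow> c = (0::real)"
  by (auto simp: integrable_iff_bounded ennreal_mult_top)

lemma H1_eq_0_if_deriv_square_integral_eq_0:
  assumes H: "H1 psi dpsi" and zero: "(LINT x|lborel. (dpsi x)\<^sup>2) = 0"
  shows "psi = (\<lambda>_. 0)"
proof -
  have dpsi: "dpsi \<in> borel_measurable lborel" and dpsi2: "integrable lborel (\<lambda>x. (dpsi x)\<^sup>2)"
    and psi2: "integrable lborel (\<lambda>x. (psi x)\<^sup>2)"
    using H unfolding H1_def by auto
  have "AE x in lborel. dpsi x = 0"
    using integral_nonneg_eq_0_iff_AE[OF dpsi2] zero by simp
  then have no_increment: "(LINT t:{a..b}|lborel. dpsi t) = 0" for a b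
    unfolding set_lebesgue_integral_def by (subst integral_eq_zero_AE) auto
  then have const: "psi x = psi 0" for x
  proof (cases "x \<le> 0")
    case True
    then show ?thesis using H1_diff_eq_integral[OF H True] no_increment by simp
  next
    case False
    then show ?thesis using H1_diff_eq_integral[OF H, of 0 x] no_increment by simp
  qed
  have "(\<lambda>x. (psi x)\<^sup>2) = (\<lambda>_. (psi 0)\<^sup>2)"
    by (rule ext) (metis const)
  then have "integrable lborel (\<lambda>_::real. (psi 0)\<^sup>2)"
    using psi2 by simp
  then show ?thesis using const by (auto simp: integrable_const_lborel_iff)
qed

lemma smooth_fun_continuous: "smooth_fun f \<Longrightarrow> continuous_on UNIV f"
  unfolding smooth_fun_def
  by (metis funpow_0 continuous_at_imp_continuous_on differentiable_imp_continuous_within)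

lemma continuous_compact_support_bounded:
  fixes f :: "real \<Rightarrow> real"
  assumes f: "continuous_on UNIV f" and supp: "\<And>x. R < \<bar>x\<bar> \<Longrightarrow> f x = 0"
  shows "\<exists>B. \<forall>x. \<bar>f x\<bar> \<le> B"
proof -
  have "compact (f ` {-R..R})"
    by (rule compact_continuous_image) (use f in \<open>auto intro: continuous_on_subset\<close>)
  then obtain B where B: "B > 0" "\<And>y. y \<in> f ` {-R..R} \<Longrightarrow> norm y \<le> B"
    using compact_imp_bounded bounded_pos by metis
  have "\<bar>f x\<bar> \<le> B" for x
    using B(1) B(2)[of "f x"] supp[of x] by (cases "\<bar>x\<bar> \<le> R") (auto simp: abs_le_iff)
  then show ?thesis by blast
qed

lemma bounded_compact_support_integrable:
  fixes f :: "real \<Rightarrow> real"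
  assumes f: "f \<in> borel_measurable lborel" and B: "\<And>x. \<bar>f x\<bar> \<le> B"
    and supp: "\<And>x. R < \<bar>x\<bar> \<Longrightarrow> f x = 0"
  shows "integrable lborel (\<lambda>x. \<bar>f x\<bar>)"
proof (rule Bochner_Integration.integrable_bound)
  show "integrable lborel (\<lambda>x. B * indicator {-R..R} x)"
    by (intro integrable_mult_right integrable_real_indicator) (auto simp: emeasure_lborel_Icc_eq)
  show "AE x in lborel. norm \<bar>f x\<bar> \<le> norm (B * indicator {-R..R} x)"
    using B order_trans[OF abs_ge_zero B] supp by (auto simp: indicator_def not_le)
qed (use f in measurable)

lemma weighted_square_perturbation:
  fixes w p q n :: real
  assumes pq: "\<bar>q - p\<bar> \<le> n" and n: "0 \<le> n" "n \<le> 1"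
  shows "w * p\<^sup>2 - n * (\<bar>w\<bar> * (p\<^sup>2 + 2)) \<le> w * q\<^sup>2"
proof -
  have "\<bar>q + p\<bar> \<le> p\<^sup>2 + 2"
    using pq n sum_squares_bound[of "\<bar>p\<bar>" 1] abs_triangle_ineq[of "q - p" "2 * p"]
    by (simp add: abs_mult)
  then have "\<bar>q - p\<bar> * \<bar>q + p\<bar> \<le> n * (p\<^sup>2 + 2)"
    using pq n by (intro mult_mono) auto
  then have "\<bar>q\<^sup>2 - p\<^sup>2\<bar> \<le> n * (p\<^sup>2 + 2)"
    by (simp add: power2_eq_square abs_mult square_diff_square_factored mult.commute)
  then have "\<bar>w * q\<^sup>2 - w * p\<^sup>2\<bar> \<le> \<bar>w\<bar> * (n * (p\<^sup>2 + 2))"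
    by (simp add: abs_mult mult_left_mono flip: right_diff_distrib)
  then show ?thesis by (simp add: algebra_simps)
qed

lemma integral_weighted_square_perturbation:
  fixes w p q :: "real \<Rightarrow> real"
  assumes w: "w \<in> borel_measurable lborel" and wB: "\<And>x. \<bar>w x\<bar> \<le> B"
    and w1: "integrable lborel (\<lambda>x. \<bar>w x\<bar>)"
    and p: "p \<in> borel_measurable lborel" and p2: "integrable lborel (\<lambda>x. (p x)\<^sup>2)"
    and q: "q \<in> borel_measurable lborel" and q2: "integrable lborel (\<lambda>x. (q x)\<^sup>2)"
    and pq: "\<And>x. \<bar>q x - p x\<bar> \<le> n" and n: "0 \<le> n" "n \<le> 1"
  shows "(LINT x|lborel. w x * (p x)\<^sup>2) - n * (LINT x|lborel. \<bar>w x\<bar> * ((p x)\<^sup>2 + 2))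
    \<le> (LINT x|lborel. w x * (q x)\<^sup>2)"
proof -
  have wp: "integrable lborel (\<lambda>x. w x * (p x)\<^sup>2)"
    by (rule integrable_bounded_mult_square[OF w wB p p2])
  have "integrable lborel (\<lambda>x. \<bar>w x\<bar> * (p x)\<^sup>2)"
    using w wB p p2 by (intro integrable_bounded_mult_square) auto
  then have wp2: "integrable lborel (\<lambda>x. \<bar>w x\<bar> * ((p x)\<^sup>2 + 2))"
    using w1 by (simp add: distrib_left)
  have "(LINT x|lborel. w x * (p x)\<^sup>2) - n * (LINT x|lborel. \<bar>w x\<bar> * ((p x)\<^sup>2 + 2))
      = (LINT x|lborel. w x * (p x)\<^sup>2 - n * (\<bar>w x\<bar> * ((p x)\<^sup>2 + 2)))"
    using wp wp2 by simp
  also have "\<dots> \<le> (LINT x|lborel. w x * (q x)\<^sup>2)"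
    using wp wp2 integrable_bounded_mult_square[OF w wB q q2]
    by (intro integral_mono weighted_square_perturbation pq n) auto
  finally show ?thesis .
qed

lemma E0_hor_eq:
  assumes H: "H1 psi dpsi" and w: "drho \<in> borel_measurable lborel" and wB: "\<And>x. \<bar>drho x\<bar> \<le> B"
  shows "E0_hor g drho M xi psi dpsi = (M * fst xi)\<^sup>2 * (LINT x|lborel. (psi x)\<^sup>2)
     + (M * fst xi)\<^sup>2 / (norm xi)\<^sup>2 * (LINT x|lborel. (dpsi x)\<^sup>2)
     - g * (LINT x|lborel. drho x * (psi x)\<^sup>2)"
proof -
  have psi: "psi \<in> borel_measurable lborel" and psi2: "integrable lborel (\<lambda>x. (psi x)\<^sup>2)"
    and dpsi2: "integrable lborel (\<lambda>x. (dpsi x)\<^sup>2)"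
    using H unfolding H1_def by auto
  have "E0_hor g drho M xi psi dpsi = (LINT x|lborel. (M * fst xi)\<^sup>2 * (psi x)\<^sup>2
     + (M * fst xi)\<^sup>2 / (norm xi)\<^sup>2 * (dpsi x)\<^sup>2 - g * (drho x * (psi x)\<^sup>2))"
    unfolding E0_hor_def
    by (intro Bochner_Integration.integral_cong) (auto simp: algebra_simps)
  then show ?thesis
    using psi2 dpsi2 integrable_bounded_mult_square[OF w wB psi psi2] by simp
qed

lemma integral_vertical_form_eq:
  assumes H: "H1 psi dpsi" and w: "drho \<in> borel_measurable lborel" and wB: "\<And>x. \<bar>drho x\<bar> \<le> B"
  shows "(LINT x|lborel. g * drho x * (psi x)\<^sup>2 - M\<^sup>2 * (dpsi x)\<^sup>2)
     = g * (LINT x|lborel. drho x * (psi x)\<^sup>2) - M\<^sup>2 * (LINT x|lborel. (dpsi x)\<^sup>2)"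
proof -
  have psi: "psi \<in> borel_measurable lborel" and psi2: "integrable lborel (\<lambda>x. (psi x)\<^sup>2)"
    and dpsi2: "integrable lborel (\<lambda>x. (dpsi x)\<^sup>2)"
    using H unfolding H1_def by auto
  then show ?thesis
    using integrable_bounded_mult_square[OF w wB psi psi2] by (simp add: mult.assoc)
qed

lemma E0_ver_eq:
  assumes H: "H2 psi dpsi ddpsi" and w: "drho \<in> borel_measurable lborel" and wB: "\<And>x. \<bar>drho x\<bar> \<le> B"
  shows "E0_ver g drho M xi psi dpsi ddpsi = M\<^sup>2 / (norm xi)\<^sup>2 * (LINT x|lborel. (ddpsi x)\<^sup>2)
     - (LINT x|lborel. g * drho x * (psi x)\<^sup>2 - M\<^sup>2 * (dpsi x)\<^sup>2)"
proof -
  have psi: "psi \<in> borel_measurable lborel" and psi2: "integrable lborel (\<lambda>x. (psi x)\<^sup>2)"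
    and dpsi2: "integrable lborel (\<lambda>x. (dpsi x)\<^sup>2)" and ddpsi2: "integrable lborel (\<lambda>x. (ddpsi x)\<^sup>2)"
    using H unfolding H2_def H1_def by auto
  have "E0_ver g drho M xi psi dpsi ddpsi = (LINT x|lborel. M\<^sup>2 / (norm xi)\<^sup>2 * (ddpsi x)\<^sup>2
     - (g * (drho x * (psi x)\<^sup>2) - M\<^sup>2 * (dpsi x)\<^sup>2))"
    unfolding E0_ver_def by (intro Bochner_Integration.integral_cong) (auto simp: algebra_simps)
  then show ?thesis
    using psi2 dpsi2 ddpsi2 integrable_bounded_mult_square[OF w wB psi psi2]
    by (simp add: mult.assoc)
qed

lemma Mc_sq_le_if_Mc_le:
  assumes r: "r \<ge> 0" and le: "Mc g drho \<le> ereal r"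
  shows "Mc_sq g drho \<le> ereal (r\<^sup>2)"
  using le sqrt_le_D unfolding Mc_def by (cases "Mc_sq g drho") (auto split: if_splits)

lemma Mc_sq_gt_if_Mc_gt:
  assumes y: "y \<ge> 0" and lt: "ereal y < Mc g drho"
  shows "ereal (y\<^sup>2) < Mc_sq g drho"
  using lt real_le_lsqrt[OF y] y unfolding Mc_def
  by (cases "Mc_sq g drho") (auto simp: not_less[symmetric] split: if_splits)

section \<open>Unstable test functions\<close>

lemma exists_H1_weighted_square_pos:
  fixes w :: "real \<Rightarrow> real"
  assumes cont: "continuous_on UNIV w" and w: "w \<in> borel_measurable lborel"
    and wB: "\<And>x. \<bar>w x\<bar> \<le> B" and x0: "w x0 > 0"
  shows "\<exists>p dp. H1 p dp \<and> 0 < (LINT x|lborel. w x * (p x)\<^sup>2)"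
proof -
  obtain d where d: "d > 0" and w_pos: "\<And>x. \<bar>x - x0\<bar> < 2 * d \<Longrightarrow> w x0 / 2 < w x"
  proof -
    obtain r where r: "r > 0" "\<And>x. dist x x0 < r \<Longrightarrow> dist (w x) (w x0) < w x0 / 2"
      using cont x0 unfolding continuous_on_iff by (metis UNIV_I half_gt_zero)
    show ?thesis
    proof (rule that[of "r / 2"])
      fix x assume "\<bar>x - x0\<bar> < 2 * (r / 2)"
      then have "\<bar>w x - w x0\<bar> < w x0 / 2" using r(2)[of x] by (simp add: dist_real_def)
      then show "w x0 / 2 < w x" by linarith
    qed (use r in simp)
  qed
  define p where "p = sliding_avg d (indicator {x0..x0+d})"
  obtain dp where H: "H1 p dp"
    unfolding p_def using H1_sliding_avg_indicator[OF d] by blast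
  have low: "w x0 / 8 * indicator {x0 - d/2..x0 + d/2} x \<le> w x * (p x)\<^sup>2" for x
  proof (cases "\<bar>x - x0\<bar> < d")
    case True
    then have w_x: "w x0 / 2 < w x" using d by (intro w_pos) auto
    show ?thesis
    proof (cases "x \<in> {x0 - d/2..x0 + d/2}")
      case True
      then have "1 / 2 \<le> p x"
        unfolding p_def using d by (intro sliding_avg_indicator_ge_half) (auto simp: abs_if)
      then have "w x0 / 2 * (1 / 2)\<^sup>2 \<le> w x * (p x)\<^sup>2"
        using w_x x0 by (intro mult_mono power_mono) auto
      then show ?thesis using True by (simp add: power2_eq_square)
    qed (use w_x x0 in auto)
  next
    case False
    then have "x \<notin> {x0 - d/2..x0 + d/2}" using d by (auto simp: abs_if split: if_splits)
    then show ?thesis using False sliding_avg_indicator_eq_0[OF d] unfolding p_def by simp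
  qed
  have "0 < w x0 / 8 * d" using x0 d by simp
  also have "\<dots> = (LINT x|lborel. w x0 / 8 * indicator {x0 - d/2..x0 + d/2} x)"
    using d by simp
  also have "\<dots> \<le> (LINT x|lborel. w x * (p x)\<^sup>2)"
    using H d integrable_bounded_mult_square[OF w wB] unfolding H1_def
    by (intro integral_mono low) auto
  finally show ?thesis using H by blast
qed

lemma Mvc_nonempty:
  fixes g M :: real and drho psi dpsi :: "real \<Rightarrow> real"
  assumes g: "g > 0" and w: "drho \<in> borel_measurable lborel" and wB: "\<And>x. \<bar>drho x\<bar> \<le> B"
    and w1: "integrable lborel (\<lambda>x. \<bar>drho x\<bar>)" and H: "H1 psi dpsi"
    and unstable: "M\<^sup>2 * (LINT x|lborel. (dpsi x)\<^sup>2) < g * (LINT x|lborel. drho x * (psi x)\<^sup>2)"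
  shows "Mvc g drho M \<noteq> {}"
proof -
  \<comment> \<open>A sliding average uniformly within \<open>n\<close> of \<open>psi\<close> does not increase \<open>int dpsi\<^sup>2\<close>
    and lowers \<open>g int drho psi\<^sup>2\<close> by at most \<open>g * n * C < D\<close>.\<close>
  define K where "K = (LINT x|lborel. (dpsi x)\<^sup>2)"
  define P where "P = (LINT x|lborel. drho x * (psi x)\<^sup>2)"
  define C where "C = (LINT x|lborel. \<bar>drho x\<bar> * ((psi x)\<^sup>2 + 2))"
  define D where "D = g * P - M\<^sup>2 * K"
  define n where "n = min 1 (D / (g * C + 1))"
  have C: "C \<ge> 0" unfolding C_def by (intro integral_nonneg_AE) auto
  have gC: "0 \<le> g * C" using g C by simp
  have D: "D > 0" using unstable unfolding D_def K_def P_def by simp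
  have n: "0 < n" "n \<le> 1" unfolding n_def using D gC by auto
  have "n * (g * C) \<le> D / (g * C + 1) * (g * C)"
    unfolding n_def using gC by (intro mult_right_mono) auto
  also have "\<dots> < D" using D gC by (simp add: field_simps)
  finally have small: "g * n * C < D" by (simp add: ac_simps)
  obtain a d dd where H2: "H2 a d dd" and close: "\<And>x. \<bar>a x - psi x\<bar> \<le> n"
    and dK: "(LINT x|lborel. (d x)\<^sup>2) \<le> K"
    using H1_uniform_approx_H2[OF H n(1)] unfolding K_def by blast
  have Ha: "H1 a d" using H2 unfolding H2_def by simp
  have "P - n * C \<le> (LINT x|lborel. drho x * (a x)\<^sup>2)"
    unfolding P_def C_def using H Ha close n
    by (intro integral_weighted_square_perturbation[OF w wB w1]) (auto simp: H1_def)
  from mult_left_mono[OF this, of g] have "g * P - g * n * C \<le> g * (LINT x|lborel. drho x * (a x)\<^sup>2)"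
    using g by (simp add: right_diff_distrib mult.assoc)
  moreover have "M\<^sup>2 * (LINT x|lborel. (d x)\<^sup>2) \<le> M\<^sup>2 * K"
    using dK by (simp add: mult_left_mono)
  ultimately have "0 < (LINT x|lborel. g * drho x * (a x)\<^sup>2 - M\<^sup>2 * (d x)\<^sup>2)"
    unfolding integral_vertical_form_eq[OF Ha w wB] using small unfolding D_def by linarith
  then show ?thesis using H2 unfolding Mvc_def by blast
qed

section \<open>Horizontal field\<close>

definition hor_quotient ::
    "real \<Rightarrow> (real \<Rightarrow> real) \<Rightarrow> real \<Rightarrow> real \<times> real \<Rightarrow> (real \<Rightarrow> real) \<Rightarrow> (real \<Rightarrow> real) \<Rightarrow> real" where
  "hor_quotient g drho M xi psi dpsi =
     (g * (norm xi)\<^sup>2 * (LINT x|lborel. drho x * (psi x)\<^sup>2) / (M * fst xi)\<^sup>2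
       - (LINT x|lborel. (dpsi x)\<^sup>2)) / (LINT x|lborel. (psi x)\<^sup>2)"

definition hor_quotients :: "real \<Rightarrow> (real \<Rightarrow> real) \<Rightarrow> real \<Rightarrow> real \<times> real \<Rightarrow> real set" where
  "hor_quotients g drho M xi = (\<lambda>(psi, dpsi). hor_quotient g drho M xi psi dpsi)
     ` {(psi, dpsi). H1 psi dpsi \<and> psi \<noteq> (\<lambda>_. 0)}"

lemma S_hor_eq: "S_hor g drho M xi = sqrt (Sup (hor_quotients g drho M xi))"
  unfolding S_hor_def hor_quotients_def hor_quotient_def ..

lemma bdd_above_hor_quotients:
  assumes g: "g > 0" and w: "drho \<in> borel_measurable lborel" and wB: "\<And>x. \<bar>drho x\<bar> \<le> B"
  shows "bdd_above (hor_quotients g drho M xi)"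
proof -
  define k where "k = g * (norm xi)\<^sup>2 / (M * fst xi)\<^sup>2"
  have k: "k \<ge> 0" unfolding k_def using g by simp
  have B: "B \<ge> 0" using order_trans[OF abs_ge_zero wB] .
  have "hor_quotient g drho M xi psi dpsi \<le> k * B" if H: "H1 psi dpsi" for psi dpsi
  proof -
    define I3 where "I3 = (LINT x|lborel. (psi x)\<^sup>2)"
    have bound: "k * (LINT x|lborel. drho x * (psi x)\<^sup>2) \<le> k * (B * I3)"
      using H abs_integral_bounded_mult_square_le[OF w wB] k unfolding H1_def I3_def
      by (intro mult_left_mono) (auto simp: abs_le_iff)
    have "0 \<le> (LINT x|lborel. (dpsi x)\<^sup>2)" "0 \<le> I3" unfolding I3_def by simp_all
    with bound have "k * (LINT x|lborel. drho x * (psi x)\<^sup>2) - (LINT x|lborel. (dpsi x)\<^sup>2)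
        \<le> (k * B) * I3" by (simp only: mult.assoc)
    moreover have "hor_quotient g drho M xi psi dpsi
        = (k * (LINT x|lborel. drho x * (psi x)\<^sup>2) - (LINT x|lborel. (dpsi x)\<^sup>2)) / I3"
      unfolding hor_quotient_def k_def I3_def by simp
    ultimately show ?thesis
      using k B \<open>0 \<le> I3\<close> by (cases "I3 = 0") (auto simp: divide_le_eq)
  qed
  then show ?thesis unfolding hor_quotients_def bdd_above_def by fast
qed

lemma E0_hor_eq_quotient:
  assumes H: "H1 psi dpsi" and w: "drho \<in> borel_measurable lborel" and wB: "\<And>x. \<bar>drho x\<bar> \<le> B"
    and M: "M \<noteq> 0" and xi: "fst xi \<noteq> 0" and psi: "(LINT x|lborel. (psi x)\<^sup>2) \<noteq> 0"
  shows "E0_hor g drho M xi psi dpsi = (M * fst xi)\<^sup>2 / (norm xi)\<^sup>2 * (LINT x|lborel. (psi x)\<^sup>2)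
     * ((norm xi)\<^sup>2 - hor_quotient g drho M xi psi dpsi)"
proof -
  have "norm xi \<noteq> 0" using xi by auto
  then show ?thesis
    using M xi psi unfolding E0_hor_eq[OF H w wB] hor_quotient_def
    by (simp add: field_simps)
qed

lemma E0_hor_neg_if_in_Ag_hor:
  assumes g: "g > 0" and cont: "continuous_on UNIV drho" and w: "drho \<in> borel_measurable lborel"
    and wB: "\<And>x. \<bar>drho x\<bar> \<le> B" and x0: "drho x0 > 0"
    and M: "M \<noteq> 0" and xi: "xi \<in> Ag_hor g drho M"
  shows "\<exists>psi dpsi. H1 psi dpsi \<and> E0_hor g drho M xi psi dpsi < 0"
proof -
  obtain p dp where Hp: "H1 p dp" and p: "0 < (LINT x|lborel. drho x * (p x)\<^sup>2)"
    using exists_H1_weighted_square_pos[OF cont w wB x0] by blast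
  show ?thesis
  proof (cases "fst xi = 0")
    case True
    then have "E0_hor g drho M xi p dp < 0"
      using E0_hor_eq[OF Hp w wB] g p by simp
    then show ?thesis using Hp by blast
  next
    case False
    let ?Q = "hor_quotients g drho M xi"
    have "?Q \<noteq> {}" using Hp p unfolding hor_quotients_def by force
    moreover have "norm xi < sqrt (Sup ?Q)"
      using xi False unfolding Ag_hor_def S_hor_eq by auto
    then have "(norm xi)\<^sup>2 < Sup ?Q"
      using real_le_lsqrt[of "norm xi" "Sup ?Q"] by force
    ultimately obtain q where "q \<in> ?Q" "(norm xi)\<^sup>2 < q"
      using less_cSup_iff[OF _ bdd_above_hor_quotients[OF g w wB]] by blast
    then obtain psi dpsi where H: "H1 psi dpsi"
      and q: "(norm xi)\<^sup>2 < hor_quotient g drho M xi psi dpsi"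
      unfolding hor_quotients_def by auto
    have "0 < (norm xi)\<^sup>2" using xi unfolding Ag_hor_def by simp
    then have I3: "(LINT x|lborel. (psi x)\<^sup>2) \<noteq> 0"
      using q unfolding hor_quotient_def by auto
    moreover have "(LINT x|lborel. (psi x)\<^sup>2) \<ge> 0" by simp
    ultimately have "(LINT x|lborel. (psi x)\<^sup>2) > 0" by linarith
    then have "E0_hor g drho M xi psi dpsi < 0"
      using q M False \<open>0 < (norm xi)\<^sup>2\<close> unfolding E0_hor_eq_quotient[OF H w wB M False I3]
      by (intro mult_pos_neg mult_pos_pos divide_pos_pos) auto
    then show ?thesis using H by blast
  qed
qed

lemma E0_hor_nonneg_if_Mc_le:
  assumes w: "drho \<in> borel_measurable lborel" and wB: "\<And>x. \<bar>drho x\<bar> \<le> B"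
    and H: "H1 psi dpsi" and psi: "psi \<noteq> (\<lambda>_. 0)"
    and Mc: "Mc g drho \<le> ereal (\<bar>M * fst xi\<bar> / norm xi)"
  shows "0 \<le> E0_hor g drho M xi psi dpsi"
proof -
  define c where "c = (M * fst xi)\<^sup>2 / (norm xi)\<^sup>2"
  define I1 where "I1 = (LINT x|lborel. drho x * (psi x)\<^sup>2)"
  define I2 where "I2 = (LINT x|lborel. (dpsi x)\<^sup>2)"
  have "Mc_sq g drho \<le> ereal c"
    using Mc_sq_le_if_Mc_le[OF _ Mc] unfolding c_def by (simp add: power_divide)
  moreover have "ereal ((LINT x|lborel. g * drho x * (psi x)\<^sup>2) / I2) \<le> Mc_sq g drho"
    unfolding Mc_sq_def I2_def using H psi by (intro SUP_upper2[where i="(psi, dpsi)"]) auto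
  ultimately have "ereal ((LINT x|lborel. g * drho x * (psi x)\<^sup>2) / I2) \<le> ereal c"
    by (rule order_trans[rotated])
  then have "g * I1 / I2 \<le> c" unfolding I1_def by (simp add: mult.assoc)
  moreover have "I2 \<noteq> 0"
    using H1_eq_0_if_deriv_square_integral_eq_0[OF H] psi unfolding I2_def by blast
  then have "I2 > 0" unfolding I2_def by (simp add: order_less_le)
  ultimately have "g * I1 \<le> c * I2" by (simp add: divide_le_eq)
  moreover have "0 \<le> (M * fst xi)\<^sup>2 * (LINT x|lborel. (psi x)\<^sup>2)" by simp
  ultimately show ?thesis
    unfolding E0_hor_eq[OF H w wB] c_def I1_def I2_def by linarith
qed

lemma E0_hor_nonneg_if_S_hor_le:
  assumes g: "g > 0" and w: "drho \<in> borel_measurable lborel" and wB: "\<And>x. \<bar>drho x\<bar> \<le> B"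
    and M: "M \<noteq> 0" and f: "fst xi \<noteq> 0" and H: "H1 psi dpsi" and psi: "psi \<noteq> (\<lambda>_. 0)"
    and S: "S_hor g drho M xi \<le> norm xi"
  shows "0 \<le> E0_hor g drho M xi psi dpsi"
proof (cases "(LINT x|lborel. (psi x)\<^sup>2) = 0")
  case True
  have "\<bar>LINT x|lborel. drho x * (psi x)\<^sup>2\<bar> \<le> B * (LINT x|lborel. (psi x)\<^sup>2)"
    using H abs_integral_bounded_mult_square_le[OF w wB] unfolding H1_def by blast
  then show ?thesis unfolding E0_hor_eq[OF H w wB] using True by simp
next
  case False
  have "Sup (hor_quotients g drho M xi) \<le> (norm xi)\<^sup>2"
    using S unfolding S_hor_eq using sqrt_le_D by force
  moreover have "hor_quotient g drho M xi psi dpsi \<in> hor_quotients g drho M xi"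
    unfolding hor_quotients_def using H psi by force
  then have "hor_quotient g drho M xi psi dpsi \<le> Sup (hor_quotients g drho M xi)"
    by (rule cSup_upper[OF _ bdd_above_hor_quotients[OF g w wB]])
  ultimately show ?thesis
    unfolding E0_hor_eq_quotient[OF H w wB M f False] by (intro mult_nonneg_nonneg) auto
qed

lemma E0_hor_nonneg_if_notin_Ag_hor:
  assumes g: "g > 0" and w: "drho \<in> borel_measurable lborel" and wB: "\<And>x. \<bar>drho x\<bar> \<le> B"
    and M: "M \<noteq> 0" and xi: "xi \<noteq> 0" and xi_out: "xi \<notin> Ag_hor g drho M" and H: "H1 psi dpsi"
  shows "0 \<le> E0_hor g drho M xi psi dpsi"
proof (cases "psi = (\<lambda>_. 0)")
  case True
  then show ?thesis unfolding E0_hor_eq[OF H w wB] by simp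
next
  case False
  have f: "fst xi \<noteq> 0" using xi_out xi unfolding Ag_hor_def by auto
  then have "Mc g drho \<le> ereal (\<bar>M * fst xi\<bar> / norm xi) \<or> S_hor g drho M xi \<le> norm xi"
    using xi_out M xi unfolding Ag_hor_def by auto
  then show ?thesis
    using E0_hor_nonneg_if_Mc_le[OF w wB H False] E0_hor_nonneg_if_S_hor_le[OF g w wB M f H False]
    by blast
qed

section \<open>Vertical field\<close>

definition ver_quotient ::
    "real \<Rightarrow> (real \<Rightarrow> real) \<Rightarrow> real \<Rightarrow> (real \<Rightarrow> real) \<Rightarrow> (real \<Rightarrow> real) \<Rightarrow> (real \<Rightarrow> real) \<Rightarrow> real" where
  "ver_quotient g drho M psi dpsi ddpsi = M\<^sup>2 * (LINT x|lborel. (ddpsi x)\<^sup>2) /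
     (LINT x|lborel. g * drho x * (psi x)\<^sup>2 - M\<^sup>2 * (dpsi x)\<^sup>2)"

definition ver_quotients :: "real \<Rightarrow> (real \<Rightarrow> real) \<Rightarrow> real \<Rightarrow> real set" where
  "ver_quotients g drho M = (\<lambda>(psi, dpsi, ddpsi). ver_quotient g drho M psi dpsi ddpsi) ` Mvc g drho M"

lemma xi_vc_eq: "xi_vc g drho M = sqrt (Inf (ver_quotients g drho M))"
  unfolding xi_vc_def ver_quotients_def ver_quotient_def ..

lemma ver_quotients_nonneg: "q \<in> ver_quotients g drho M \<Longrightarrow> 0 \<le> q"
  unfolding ver_quotients_def ver_quotient_def Mvc_def by auto

lemma bdd_below_ver_quotients: "bdd_below (ver_quotients g drho M)"
  using ver_quotients_nonneg unfolding bdd_below_def by blast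

lemma E0_ver_eq_quotient:
  assumes "(psi, dpsi, ddpsi) \<in> Mvc g drho M" and w: "drho \<in> borel_measurable lborel"
    and wB: "\<And>x. \<bar>drho x\<bar> \<le> B" and xi: "xi \<noteq> 0"
  shows "E0_ver g drho M xi psi dpsi ddpsi = (LINT x|lborel. g * drho x * (psi x)\<^sup>2 - M\<^sup>2 * (dpsi x)\<^sup>2)
     / (norm xi)\<^sup>2 * (ver_quotient g drho M psi dpsi ddpsi - (norm xi)\<^sup>2)"
proof -
  define D where "D = (LINT x|lborel. g * drho x * (psi x)\<^sup>2 - M\<^sup>2 * (dpsi x)\<^sup>2)"
  have H: "H2 psi dpsi ddpsi" and D: "D > 0"
    using assms(1) unfolding Mvc_def D_def by auto
  show ?thesis
    using xi D unfolding E0_ver_eq[OF H w wB] ver_quotient_def D_def[symmetric]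
    by (simp add: field_simps)
qed

lemma E0_ver_neg_if_in_Ag_ver:
  assumes g: "g > 0" and w: "drho \<in> borel_measurable lborel" and wB: "\<And>x. \<bar>drho x\<bar> \<le> B"
    and w1: "integrable lborel (\<lambda>x. \<bar>drho x\<bar>)" and M: "ereal \<bar>M\<bar> < Mc g drho"
    and xi: "xi \<in> Ag_ver g drho M"
  shows "\<exists>psi dpsi ddpsi. (psi, dpsi, ddpsi) \<in> Mvc g drho M \<and> E0_ver g drho M xi psi dpsi ddpsi < 0"
proof -
  let ?Q = "ver_quotients g drho M"
  have "ereal (M\<^sup>2) < Mc_sq g drho" using Mc_sq_gt_if_Mc_gt[OF _ M] by simp
  then obtain psi dpsi where H: "H1 psi dpsi" and
    "M\<^sup>2 < (LINT x|lborel. g * drho x * (psi x)\<^sup>2) / (LINT x|lborel. (dpsi x)\<^sup>2)"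
    unfolding Mc_sq_def less_SUP_iff by auto
  moreover have "0 \<le> (LINT x|lborel. (dpsi x)\<^sup>2)" by simp
  ultimately have "M\<^sup>2 * (LINT x|lborel. (dpsi x)\<^sup>2) < g * (LINT x|lborel. drho x * (psi x)\<^sup>2)"
    by (cases "(LINT x|lborel. (dpsi x)\<^sup>2) = 0") (auto simp: less_divide_eq mult.assoc mult.commute)
  then have "?Q \<noteq> {}"
    using Mvc_nonempty[OF g w wB w1 H] unfolding ver_quotients_def by blast
  moreover have "xi_vc g drho M < norm xi" using xi unfolding Ag_ver_def by simp
  then have "Inf ?Q < (norm xi)\<^sup>2"
    using real_less_rsqrt[of "norm xi" "Inf ?Q"] real_sqrt_abs[of "norm xi"]
    unfolding xi_vc_eq by (metis abs_norm_cancel not_less real_sqrt_le_mono)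
  ultimately obtain q where "q \<in> ?Q" "q < (norm xi)\<^sup>2"
    using cInf_less_iff[OF _ bdd_below_ver_quotients] by blast
  then obtain psi dpsi ddpsi where mem: "(psi, dpsi, ddpsi) \<in> Mvc g drho M"
    and q: "ver_quotient g drho M psi dpsi ddpsi < (norm xi)\<^sup>2"
    unfolding ver_quotients_def by auto
  have xi_nz: "xi \<noteq> 0"
    using ver_quotients_nonneg \<open>q \<in> ?Q\<close> \<open>q < (norm xi)\<^sup>2\<close> by force
  have "E0_ver g drho M xi psi dpsi ddpsi < 0"
    using mem q xi_nz unfolding E0_ver_eq_quotient[OF mem w wB xi_nz] Mvc_def
    by (intro mult_pos_neg divide_pos_pos) auto
  then show ?thesis using mem by blast
qed

lemma E0_ver_nonneg_if_notin_Ag_ver: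
  assumes w: "drho \<in> borel_measurable lborel" and wB: "\<And>x. \<bar>drho x\<bar> \<le> B"
    and xi: "xi \<noteq> 0" and xi_out: "xi \<notin> Ag_ver g drho M" and H: "H2 psi dpsi ddpsi"
  shows "0 \<le> E0_ver g drho M xi psi dpsi ddpsi"
proof (cases "(psi, dpsi, ddpsi) \<in> Mvc g drho M")
  case False
  then have "(LINT x|lborel. g * drho x * (psi x)\<^sup>2 - M\<^sup>2 * (dpsi x)\<^sup>2) \<le> 0"
    using H unfolding Mvc_def by auto
  moreover have "0 \<le> M\<^sup>2 / (norm xi)\<^sup>2 * (LINT x|lborel. (ddpsi x)\<^sup>2)" by simp
  ultimately show ?thesis unfolding E0_ver_eq[OF H w wB] by linarith
next
  case True
  let ?Q = "ver_quotients g drho M"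
  have q: "ver_quotient g drho M psi dpsi ddpsi \<in> ?Q"
    using True unfolding ver_quotients_def by force
  have "(norm xi)\<^sup>2 \<le> Inf ?Q"
    using xi_out sqrt_ge_absD[of "norm xi"] unfolding Ag_ver_def xi_vc_eq by simp
  also have "\<dots> \<le> ver_quotient g drho M psi dpsi ddpsi"
    by (rule cInf_lower[OF q bdd_below_ver_quotients])
  finally show ?thesis
    using True xi unfolding E0_ver_eq_quotient[OF True w wB xi] Mvc_def
    by (intro mult_nonneg_nonneg divide_nonneg_pos) auto
qed

theorem proposition2p4:
  fixes g M :: real and rho drho :: "real \<Rightarrow> real" and xi :: "real \<times> real"
  assumes g_pos: "g > 0"
    and rho_deriv: "\<And>x. (rho has_real_derivative drho x) (at x)"
    and rho_bdd: "\<exists>C. \<forall>x. \<bar>rho x\<bar> \<le> C"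
    and drho_smooth: "smooth_fun drho"
    and drho_supp: "\<exists>R. \<forall>x. R < \<bar>x\<bar> \<longrightarrow> drho x = 0"
    and rho_inf: "0 < (INF x. rho x)"
    and drho_pos: "\<exists>x0. drho x0 > 0"
    and xi_nz: "xi \<noteq> 0"
  shows
   "(M \<noteq> 0 \<longrightarrow>
      (xi \<in> Ag_hor g drho M \<longrightarrow>
         (\<exists>psi dpsi. H1 psi dpsi \<and> E0_hor g drho M xi psi dpsi < 0)) \<and>
      (xi \<notin> Ag_hor g drho M \<longrightarrow>
         (\<forall>psi dpsi. H1 psi dpsi \<longrightarrow> (norm xi)\<^sup>2 * E0_hor g drho M xi psi dpsi \<ge> 0)))
    \<and>
    (0 < \<bar>M\<bar> \<and> ereal \<bar>M\<bar> < Mc g drho \<longrightarrow>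
      (xi \<in> Ag_ver g drho M \<longrightarrow>
         (\<exists>psi dpsi ddpsi. (psi, dpsi, ddpsi) \<in> Mvc g drho M \<and>
                           E0_ver g drho M xi psi dpsi ddpsi < 0)) \<and>
      (xi \<notin> Ag_ver g drho M \<longrightarrow>
         (\<forall>psi dpsi ddpsi. H2 psi dpsi ddpsi \<longrightarrow>
                           (norm xi)\<^sup>2 * E0_ver g drho M xi psi dpsi ddpsi \<ge> 0)))"
proof -
  \<comment> \<open>Only \<open>drho\<close> enters.\<close>
  obtain R where supp: "\<And>x. R < \<bar>x\<bar> \<Longrightarrow> drho x = 0" using drho_supp by blast
  have cont: "continuous_on UNIV drho" using drho_smooth by (rule smooth_fun_continuous)
  then have w: "drho \<in> borel_measurable lborel" by (simp add: borel_measurable_continuous_onI)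
  obtain B where wB: "\<And>x. \<bar>drho x\<bar> \<le> B"
    using continuous_compact_support_bounded[OF cont supp] by blast
  have w1: "integrable lborel (\<lambda>x. \<bar>drho x\<bar>)"
    by (rule bounded_compact_support_integrable[OF w wB supp])
  obtain x0 where x0: "drho x0 > 0" using drho_pos by blast
  show ?thesis
    using E0_hor_neg_if_in_Ag_hor[OF g_pos cont w wB x0]
      E0_hor_nonneg_if_notin_Ag_hor[OF g_pos w wB _ xi_nz]
      E0_ver_neg_if_in_Ag_ver[OF g_pos w wB w1]
      E0_ver_nonneg_if_notin_Ag_ver[OF w wB xi_nz]
    by auto
qed

end
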